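(* Let $A$ be a set with a ternary operation $p\colon A^3\to A$ and two constants $0,1\in A$ satisfying, for all $a,b,c,b_1,b_2,b_3\in A$: (T1) $p(0,a,1)=a$; (T2) $p(a,b,a)=a$; (T3) $p(a,p(b_1,b_2,b_3),c)=p(p(a,b_1,c),b_2,p(a,b_3,c))$; (T4) $p(a,0,b)=a=p(b,1,a)$. Define $\bar{a}=p(1,a,0)$, $a\cdot b=p(0,a,b)$ and $a+b=p(a,b,\bar a)$. Then the following conditions are equivalent: (i) $(A,+,\cdot,0,1)$ is a unitary (right) near-ring of characteristic $2$; (ii) $p(a,b,c)=a+(b\cdot(a+c))$ for all $a,b,c\in A$; (iii) $a+a=0$ for all $a\in A$; (iv) $(a+b)\cdot c=(a\cdot c)+(b\cdot c)$ for all $a,b,c\in A$.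
   Context: A unitary (right) near-ring $(A,+,\cdot,0,1)$ is a set $A$ with binary operations $+$ and $\cdot$ such that $(A,+,0)$ is a group (not assumed abelian a priori), $(A,\cdot,1)$ is a monoid, and the right distributive law $(a+b)\cdot c=a\cdot c+b\cdot c$ holds for all $a,b,c$. It has characteristic $2$ if $b+b=0$ for all $b\in A$. *)

theory Defs
  imports Main
begin

definition is_group_op :: "('a \<Rightarrow> 'a \<Rightarrow> 'a) \<Rightarrow> 'a \<Rightarrow> bool" where
  "is_group_op add z \<longleftrightarrow>
     (\<forall>a b c. add (add a b) c = add a (add b c)) \<and>
     (\<forall>a. add z a = a \<and> add a z = a) \<and>
     (\<forall>a. \<exists>b. add a b = z \<and> add b a = z)"

definition is_monoid_op :: "('a \<Rightarrow> 'a \<Rightarrow> 'a) \<Rightarrow> 'a \<Rightarrow> bool" where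
  "is_monoid_op mul u \<longleftrightarrow>
     (\<forall>a b c. mul (mul a b) c = mul a (mul b c)) \<and>
     (\<forall>a. mul u a = a \<and> mul a u = a)"

definition unitary_right_near_ring ::
  "('a \<Rightarrow> 'a \<Rightarrow> 'a) \<Rightarrow> ('a \<Rightarrow> 'a \<Rightarrow> 'a) \<Rightarrow> 'a \<Rightarrow> 'a \<Rightarrow> bool" where
  "unitary_right_near_ring add mul z u \<longleftrightarrow>
     is_group_op add z \<and> is_monoid_op mul u \<and>
     (\<forall>a b c. mul (add a b) c = add (mul a c) (mul b c))"

definition char2 :: "('a \<Rightarrow> 'a \<Rightarrow> 'a) \<Rightarrow> 'a \<Rightarrow> bool" where
  "char2 add z \<longleftrightarrow> (\<forall>b. add b b = z)"

text \<open>Derived operations from the ternary operation p with constants 0 (z) and 1 (u).\<close>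

definition tbar :: "('a \<Rightarrow> 'a \<Rightarrow> 'a \<Rightarrow> 'a) \<Rightarrow> 'a \<Rightarrow> 'a \<Rightarrow> 'a \<Rightarrow> 'a" where
  "tbar p z u a = p u a z"

definition tmul :: "('a \<Rightarrow> 'a \<Rightarrow> 'a \<Rightarrow> 'a) \<Rightarrow> 'a \<Rightarrow> 'a \<Rightarrow> 'a \<Rightarrow> 'a" where
  "tmul p z a b = p z a b"

definition tadd :: "('a \<Rightarrow> 'a \<Rightarrow> 'a \<Rightarrow> 'a) \<Rightarrow> 'a \<Rightarrow> 'a \<Rightarrow> 'a \<Rightarrow> 'a \<Rightarrow> 'a" where
  "tadd p z u a b = p a b (tbar p z u a)"

end

theory Submission
  imports Defs
begin

text \<open>Everything rests on the distributivity (T3) of \<open>p\<close> in its middle argument. It makes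
  \<open>bar\<close> an involution with \<open>p(a, bar b, c) = p(c, b, a)\<close>, makes \<open>+\<close> associative with
  neutral element \<open>0\<close> and \<open>\<cdot>\<close> a monoid with unit \<open>1\<close>, and yields
  \<open>(a + b) c = p(ac, b, p(c, a, 0))\<close> and \<open>ac + bc = p(ac, b, ac + c)\<close>.
  At \<open>a = 1\<close> these read \<open>p(c, b, 0)\<close> and \<open>p(c, b, c + c)\<close>, so right distributivity
  forces \<open>c + c = 0\<close> (take \<open>b = 1\<close>). Conversely, if \<open>c + c = 0\<close> then \<open>+\<close> is a Boolean,
  hence abelian, group, and \<open>ac + c = c + ac = p(c, a, c + c) = p(c, a, 0)\<close> identifies the two
  expressions. Condition (ii) at \<open>b = 1\<close> says \<open>a + (a + c) = c\<close>, i.e. \<open>a + a = 0\<close>;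
  conversely \<open>a + a = 0\<close> gives \<open>a + b(a + c) = p(a, b, c)\<close> by two applications of (T3).\<close>

lemma self_inverse_imp_commute:
  fixes add :: "'a \<Rightarrow> 'a \<Rightarrow> 'a"
  assumes assoc: "\<And>a b c. add (add a b) c = add a (add b c)"
    and zero_left: "\<And>a. add z a = a" and zero_right: "\<And>a. add a z = a"
    and self_inverse: "\<And>a. add a a = z"
  shows "add a b = add b a"
proof -
  have "add b a = add (add b a) (add (add a b) (add a b))"
    by (simp add: self_inverse zero_right)
  also have "\<dots> = add b (add (add a a) (add b (add a b)))"
    by (simp add: assoc)
  also have "\<dots> = add a b"
    by (simp add: self_inverse zero_left flip: assoc)
  finally show ?thesis by simp
qed

locale ternary_algebra =
  fixes p :: "'a \<Rightarrow> 'a \<Rightarrow> 'a \<Rightarrow> 'a" and z u :: 'a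
  assumes p_zero_left_one_right: "p z a u = a"
    and p_distrib: "p a (p b1 b2 b3) c = p (p a b1 c) b2 (p a b3 c)"
    and p_zero: "p a z b = a"
    and p_one: "p b u a = a"
begin

abbreviation bar :: "'a \<Rightarrow> 'a" where "bar \<equiv> tbar p z u"
abbreviation add :: "'a \<Rightarrow> 'a \<Rightarrow> 'a" where "add \<equiv> tadd p z u"
abbreviation mul :: "'a \<Rightarrow> 'a \<Rightarrow> 'a" where "mul \<equiv> tmul p z"

lemma add_eq: "add a b = p a b (bar a)"
  by (simp add: tadd_def)

lemma mul_eq: "mul a b = p z a b"
  by (simp add: tmul_def)

lemma bar_eq: "bar a = p u a z"
  by (simp add: tbar_def)

lemma p_bar_middle: "p a (bar b) c = p c b a"
  by (simp add: bar_eq p_distrib p_zero p_one)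

lemma bar_p: "bar (p a b c) = p (bar a) b (bar c)"
  by (simp add: bar_eq p_distrib)

lemma bar_bar: "bar (bar a) = a"
  by (simp add: bar_eq p_distrib p_zero p_one p_zero_left_one_right)

lemma bar_zero: "bar z = u"
  by (simp add: bar_eq p_zero)

lemma add_assoc: "add (add a b) c = add a (add b c)"
proof -
  have "add a (add b c) = p (add a b) c (p a (bar b) (bar a))"
    by (simp add: add_eq p_distrib)
  also have "\<dots> = p (add a b) c (bar (add a b))"
    by (simp add: p_bar_middle add_eq bar_p bar_bar)
  finally show ?thesis
    by (simp add: add_eq)
qed

lemma add_zero_left: "add z a = a"
  by (simp add: add_eq bar_zero p_zero_left_one_right)

lemma add_zero_right: "add a z = a"
  by (simp add: add_eq p_zero)

lemma mul_monoid: "is_monoid_op mul u"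
  by (simp add: is_monoid_op_def mul_eq p_distrib p_zero p_one p_zero_left_one_right)

lemma mul_one_left: "mul u a = a"
  using mul_monoid by (simp add: is_monoid_op_def)

lemma add_mul_right: "add c (mul a c) = p c a (add c c)"
  by (simp add: add_eq mul_eq p_distrib p_zero)

lemma mul_add_left: "mul (add a b) c = p (mul a c) b (p c a z)"
  by (simp add: add_eq mul_eq p_distrib p_bar_middle)

lemma add_mul_mul: "add (mul a c) (mul b c) = p (mul a c) b (add (mul a c) c)"
  by (simp add: add_eq mul_eq[of b] p_distrib p_zero)

lemma char2_imp_p_eq:
  assumes char2: "\<And>a. add a a = z"
  shows "p a b c = add a (mul b (add a c))"
proof -
  have a_a: "p a a (bar a) = z"
    using char2 by (simp add: add_eq)
  have "p a (bar a) (bar a) = bar (p a a (bar a))"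
    by (simp add: p_bar_middle bar_p bar_bar)
  then have a_bar_bar: "p a (bar a) (bar a) = u"
    by (simp add: a_a bar_zero)
  have "add a (mul b (add a c)) = p (p a z (bar a)) b (p a (p a c (bar a)) (bar a))"
    by (simp add: add_eq mul_eq p_distrib)
  also have "\<dots> = p a b (p (p a a (bar a)) c (p a (bar a) (bar a)))"
    by (simp add: p_distrib p_zero)
  also have "\<dots> = p a b c"
    by (simp add: a_a a_bar_bar p_zero_left_one_right)
  finally show ?thesis by simp
qed

lemma p_eq_imp_char2:
  assumes p_eq: "\<And>a b c. p a b c = add a (mul b (add a c))"
  shows "add a a = z"
proof -
  have cancel: "add a (add a c) = c" for c
    using p_eq[of a u c] by (simp add: p_one mul_one_left)
  show ?thesis
    using cancel[of z] by (simp add: add_zero_right)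
qed

lemma char2_imp_add_commute:
  assumes "\<And>a. add a a = z"
  shows "add a b = add b a"
  using self_inverse_imp_commute[OF add_assoc add_zero_left add_zero_right assms] .

lemma char2_imp_right_distrib:
  assumes char2: "\<And>a. add a a = z"
  shows "mul (add a b) c = add (mul a c) (mul b c)"
proof -
  have "add (mul a c) c = add c (mul a c)"
    using char2 by (rule char2_imp_add_commute)
  also have "\<dots> = p c a z"
    by (simp add: add_mul_right char2)
  finally have "add (mul a c) c = p c a z" .
  then show ?thesis
    by (simp add: mul_add_left add_mul_mul)
qed

lemma char2_imp_near_ring:
  assumes char2: "\<And>a. add a a = z"
  shows "unitary_right_near_ring add mul z u"
  unfolding unitary_right_near_ring_def is_group_op_def
  using add_assoc add_zero_left add_zero_right char2 mul_monoid char2_imp_right_distrib[OF char2]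
  by blast

lemma right_distrib_imp_char2:
  assumes distrib: "\<And>a b c. mul (add a b) c = add (mul a c) (mul b c)"
  shows "add c c = z"
proof -
  have "p c b z = p c b (add c c)" for b
    using distrib[of u b c] by (simp add: mul_add_left add_mul_right mul_one_left p_one)
  from this[of u] show ?thesis
    by (simp add: p_one)
qed

end

theorem theorem3:
  fixes p :: "'a \<Rightarrow> 'a \<Rightarrow> 'a \<Rightarrow> 'a" and z u :: 'a
  assumes T1: "\<And>a. p z a u = a"
    and T2: "\<And>a b. p a b a = a"
    and T3: "\<And>a b1 b2 b3 c. p a (p b1 b2 b3) c = p (p a b1 c) b2 (p a b3 c)"
    and T4: "\<And>a b. p a z b = a \<and> a = p b u a"
  defines "add \<equiv> tadd p z u" and "mul \<equiv> tmul p z"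
  shows "((unitary_right_near_ring add mul z u \<and> char2 add z)
           \<longleftrightarrow> (\<forall>a b c. p a b c = add a (mul b (add a c))))
         \<and> ((\<forall>a b c. p a b c = add a (mul b (add a c))) \<longleftrightarrow> (\<forall>a. add a a = z))
         \<and> ((\<forall>a. add a a = z) \<longleftrightarrow> (\<forall>a b c. mul (add a b) c = add (mul a c) (mul b c)))"
proof -
  interpret T: ternary_algebra p z u
    using T1 T3 T4 by unfold_locales auto
  show ?thesis
    unfolding add_def mul_def char2_def
    using T.char2_imp_p_eq T.p_eq_imp_char2 T.char2_imp_near_ring
      T.char2_imp_right_distrib T.right_distrib_imp_char2
    by meson
qed

end
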